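(* Let $\mu\in\mathcal{L}$ and let $\alpha\neq\beta$ be atoms of $\mu$. Then \[ \min\big(\mu(\{\alpha\}),\mu(\{\beta\})\big)<\frac{2\pi}{|\alpha-\beta|}. \]
   Context: For a probability measure $\mu$ on $\mathbb{R}$, $G_\mu(z)=\int\frac{d\mu(x)}{z-x}$ and $F_\mu=1/G_\mu$ on the upper half-plane $\mathbb{C}^+$. $\mathcal{L}$ is the set of probability measures $\mu$ on $\mathbb{R}$ with $F_\mu(z+2\pi)=F_\mu(z)+2\pi$ for all $z\in\mathbb{C}^+$. *)

theory Defs
  imports "HOL-Probability.Probability"
begin

definition cauchy_G :: "real measure \<Rightarrow> complex \<Rightarrow> complex" where
  "cauchy_G M z = (LINT x|M. 1 / (z - complex_of_real x))"

definition cauchy_F :: "real measure \<Rightarrow> complex \<Rightarrow> complex" where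
  "cauchy_F M z = 1 / cauchy_G M z"

definition class_L :: "real measure set" where
  "class_L = {M. prob_space M \<and> sets M = sets borel \<and>
     (\<forall>z. 0 < Im z \<longrightarrow> cauchy_F M (z + complex_of_real (2 * pi)) = cauchy_F M z + complex_of_real (2 * pi))}"

end

theory Submission
  imports Defs
begin

text \<open>Put \<open>z = \<alpha> + i y\<close> with \<open>y = \<mu>{\<alpha>} \<pi>/4\<close>. The atom at \<open>\<alpha>\<close> forces
  \<open>|F(z)| \<le> y/\<mu>{\<alpha>} = \<pi>/4\<close>. Translating by a multiple \<open>2\<pi>k\<close> that brings \<open>\<alpha>\<close> within
  \<open>\<pi>\<close> of \<open>\<beta>\<close> gives a point \<open>w\<close> with \<open>F(w) = F(z) + 2\<pi>k\<close>, so \<open>Im F(w) \<le> \<pi>/4\<close>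
  while \<open>|F(w)| \<ge> |\<alpha> - \<beta>| - 5\<pi>/4\<close>. The atom at \<open>\<beta>\<close> bounds \<open>|F(w)|\<close> by the
  distance from \<open>w\<close> to \<open>\<beta>\<close>, which yields
  \<open>\<mu>{\<alpha>} \<mu>{\<beta>} (|\<alpha> - \<beta>| - 5\<pi>/4)\<^sup>2 \<le> 17\<pi>\<^sup>2/16\<close>, incompatible with
  \<open>min(\<mu>{\<alpha>}, \<mu>{\<beta>}) |\<alpha> - \<beta>| \<ge> 2\<pi>\<close>.\<close>

lemma norm_cauchy_kernel_le:
  fixes z :: complex
  assumes "Im z \<noteq> 0"
  shows "norm (1 / (z - of_real x)) \<le> 1 / \<bar>Im z\<bar>"
proof -
  have "\<bar>Im z\<bar> \<le> cmod (z - of_real x)"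
    using abs_Im_le_cmod[of "z - of_real x"] by simp
  with assms show ?thesis by (simp add: norm_divide divide_simps)
qed

lemma integrable_cauchy_kernel:
  fixes z :: complex
  assumes "finite_measure M" "sets M = sets borel" "Im z \<noteq> 0"
  shows "integrable M (\<lambda>x. 1 / (z - of_real x))"
proof -
  interpret finite_measure M by fact
  have "z - of_real x \<noteq> 0" for x
    using assms(3) by (auto simp: complex_eq_iff)
  then have "continuous_on UNIV (\<lambda>x::real. 1 / (z - of_real x))"
    by (intro continuous_intros) auto
  then have "(\<lambda>x. 1 / (z - of_real x)) \<in> borel_measurable M"
    using borel_measurable_continuous_onI measurable_cong_sets[OF assms(2) refl] by blast
  then show ?thesis
    by (intro integrable_const_bound[where B = "1 / \<bar>Im z\<bar>"]) (simp_all add: norm_cauchy_kernel_le assms(3))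
qed

lemma Im_cauchy_G:
  assumes "finite_measure M" "sets M = sets borel" "Im z \<noteq> 0"
  shows "Im (cauchy_G M z) = - (LINT x|M. Im z / (cmod (z - of_real x))\<^sup>2)"
proof -
  have "Im (1 / (z - of_real x)) = - (Im z / (cmod (z - of_real x))\<^sup>2)" for x
    by (simp add: Im_divide cmod_power2)
  then show ?thesis
    unfolding cauchy_G_def integral_Im[OF integrable_cauchy_kernel[OF assms], symmetric]
    by simp
qed

lemma atom_le_neg_Im_cauchy_G:
  assumes M: "finite_measure M" "sets M = sets borel" and z: "Im z > 0"
  shows "measure M {c} * Im z / (cmod (z - of_real c))\<^sup>2 \<le> - Im (cauchy_G M z)"
proof -
  interpret finite_measure M by fact
  define h where "h = (\<lambda>x. Im z / (cmod (z - of_real x))\<^sup>2)"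
  have h_integrable: "integrable M h"
    using integrable_Im[OF integrable_cauchy_kernel[OF M, of z]] z
    by (simp add: h_def Im_divide cmod_power2)
  have space: "space M = UNIV" and atom: "{c} \<in> sets M"
    using sets_eq_imp_space_eq[OF M(2)] M(2) by auto
  have "measure M {c} * h c = (LINT x|M. h c * indicator {c} x)"
    using atom by (simp add: space)
  also have "\<dots> \<le> (LINT x|M. h x)"
  proof (rule integral_mono[OF _ h_integrable])
    show "integrable M (\<lambda>x. h c * indicator {c} x)"
      using atom by (intro integrable_mult_right integrable_real_indicator) (auto simp: less_top[symmetric])
    show "h c * indicator {c} x \<le> h x" for x
      using z by (cases "x = c") (auto simp: h_def)
  qed
  also have "\<dots> = - Im (cauchy_G M z)"
    using Im_cauchy_G[OF M] z by (simp add: h_def)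
  finally show ?thesis by (simp add: h_def)
qed

text \<open>Via \<open>Im F = -Im G / |G|\<^sup>2\<close> and \<open>|F| = 1/|G|\<close>; if \<open>G(z) = 0\<close> both sides vanish,
  since then \<open>F(z) = 1/0 = 0\<close>.\<close>
lemma atom_bound_cauchy_F:
  assumes M: "finite_measure M" "sets M = sets borel" and z: "Im z > 0"
  shows "measure M {c} * Im z * (cmod (cauchy_F M z))\<^sup>2
           \<le> Im (cauchy_F M z) * (cmod (z - of_real c))\<^sup>2"
proof -
  define g where "g = cauchy_G M z"
  have "z - of_real c \<noteq> 0"
    using z by (auto simp: complex_eq_iff)
  then have "measure M {c} * Im z \<le> - Im g * (cmod (z - of_real c))\<^sup>2"
    using atom_le_neg_Im_cauchy_G[OF M z, of c] by (simp add: g_def divide_le_eq)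
  then have "measure M {c} * Im z / (cmod g)\<^sup>2 \<le> - Im g * (cmod (z - of_real c))\<^sup>2 / (cmod g)\<^sup>2"
    by (intro divide_right_mono) auto
  then show ?thesis
    by (simp add: cauchy_F_def g_def[symmetric] Im_divide norm_divide cmod_power2 power_divide)
qed

lemma cauchy_F_add_nat_period:
  assumes L: "M \<in> class_L" and z: "Im z > 0"
  shows "cauchy_F M (z + of_real (2 * pi * real n)) = cauchy_F M z + of_real (2 * pi * real n)"
proof (induction n)
  case (Suc n)
  have period: "cauchy_F M (w + of_real (2 * pi)) = cauchy_F M w + of_real (2 * pi)" if "Im w > 0" for w
    using L that by (simp add: class_L_def)
  have "cauchy_F M (z + of_real (2 * pi * real (Suc n)))
          = cauchy_F M ((z + of_real (2 * pi * real n)) + of_real (2 * pi))"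
    by (simp add: algebra_simps)
  also have "\<dots> = cauchy_F M (z + of_real (2 * pi * real n)) + of_real (2 * pi)"
    using z by (intro period) simp
  also have "\<dots> = cauchy_F M z + of_real (2 * pi * real (Suc n))"
    using Suc.IH by (simp add: algebra_simps)
  finally show ?case .
qed simp

lemma cauchy_F_add_int_period:
  assumes L: "M \<in> class_L" and z: "Im z > 0"
  shows "cauchy_F M (z + of_real (2 * pi * of_int k)) = cauchy_F M z + of_real (2 * pi * of_int k)"
proof (cases "k \<ge> 0")
  case True
  then show ?thesis
    using cauchy_F_add_nat_period[OF L z, of "nat k"] by simp
next
  case False
  define n where "n = nat (- k)"
  have k: "of_int k = - real n"
    using False by (simp add: n_def)
  define z' where "z' = z - of_real (2 * pi * real n)"
  have "Im z' > 0"
    using z by (simp add: z'_def)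
  from cauchy_F_add_nat_period[OF L this, of n]
  have "cauchy_F M z = cauchy_F M z' + of_real (2 * pi * real n)"
    by (simp add: z'_def)
  then show ?thesis
    by (simp add: k z'_def)
qed

lemma exists_int_multiple_near:
  fixes x p :: real
  assumes "p > 0"
  shows "\<exists>k::int. \<bar>x - p * of_int k\<bar> \<le> p / 2"
proof
  have "\<bar>x - p * of_int (round (x / p))\<bar> = p * \<bar>of_int (round (x / p)) - x / p\<bar>"
    using assms by (simp add: abs_mult abs_minus_commute field_simps)
  also have "\<dots> \<le> p / 2"
    using of_int_round_abs_le[of "x / p"] assms by simp
  finally show "\<bar>x - p * of_int (round (x / p))\<bar> \<le> p / 2" .
qed

lemma atom_masses_product_bound:
  assumes L: "M \<in> class_L" and far: "5 * pi / 4 \<le> \<bar>\<alpha> - \<beta>\<bar>"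
  shows "measure M {\<alpha>} * measure M {\<beta>} * (\<bar>\<alpha> - \<beta>\<bar> - 5 * pi / 4)\<^sup>2 \<le> 17 / 16 * pi\<^sup>2"
proof (cases "measure M {\<alpha>} = 0")
  case False
  have "prob_space M" and S: "sets M = sets borel"
    using L by (auto simp: class_L_def)
  interpret prob_space M by fact
  note atom_bound = atom_bound_cauchy_F[OF finite_measure_axioms S]
  define a b where "a = measure M {\<alpha>}" and "b = measure M {\<beta>}"
  have a: "0 < a" "a \<le> 1" and b: "0 \<le> b"
    using False by (auto simp: a_def b_def zero_less_measure_iff)
  define y where "y = a * pi / 4"
  define z where "z = Complex \<alpha> y"
  have y: "0 < y" "y \<le> pi / 4"
    using a by (auto simp: y_def)
  then have z: "Im z > 0" "Im z = y" "cmod (z - of_real \<alpha>) = y"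
    by (auto simp: z_def cmod_def)
  have Fz: "cmod (cauchy_F M z) \<le> pi / 4"
  proof -
    define N where "N = cmod (cauchy_F M z)"
    have "a * y * N\<^sup>2 \<le> Im (cauchy_F M z) * y\<^sup>2"
      using atom_bound[OF z(1), of \<alpha>] z by (simp add: a_def N_def)
    also have "\<dots> \<le> N * y\<^sup>2"
      using abs_Im_le_cmod[of "cauchy_F M z"] by (intro mult_right_mono) (auto simp: N_def)
    finally have "a * N * (y * N) \<le> y * (y * N)"
      by (simp add: power2_eq_square algebra_simps)
    then have "a * N \<le> y"
      using y by (cases "N = 0") (auto simp: N_def)
    then show ?thesis
      using a by (simp add: N_def y_def field_simps)
  qed
  obtain k :: int where k: "\<bar>(\<beta> - \<alpha>) - 2 * pi * of_int k\<bar> \<le> pi"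
    using exists_int_multiple_near[of "2 * pi" "\<beta> - \<alpha>"] by auto
  define w where "w = z + of_real (2 * pi * of_int k)"
  have Fw: "cauchy_F M w = cauchy_F M z + of_real (2 * pi * of_int k)"
    unfolding w_def by (rule cauchy_F_add_int_period[OF L z(1)])
  have w: "Im w > 0" "Im w = y"
    using z by (simp_all add: w_def)
  have dist_w: "(cmod (w - of_real \<beta>))\<^sup>2 \<le> 17 / 16 * pi\<^sup>2"
  proof -
    have "(cmod (w - of_real \<beta>))\<^sup>2 = ((\<beta> - \<alpha>) - 2 * pi * of_int k)\<^sup>2 + y\<^sup>2"
      by (simp add: w_def z_def cmod_power2 power2_commute algebra_simps)
    also have "\<dots> \<le> pi\<^sup>2 + (pi / 4)\<^sup>2"
      using k y by (intro add_mono) (auto simp: power2_le_iff_abs_le[OF pi_ge_zero] intro: power_mono)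
    finally show ?thesis by (simp add: power2_eq_square)
  qed
  define N where "N = cmod (cauchy_F M w)"
  have "b * y * N\<^sup>2 \<le> Im (cauchy_F M w) * (cmod (w - of_real \<beta>))\<^sup>2"
    using atom_bound[OF w(1), of \<beta>] w(2) by (simp add: b_def N_def)
  also have "\<dots> \<le> pi / 4 * (17 / 16 * pi\<^sup>2)"
    using Fz abs_Im_le_cmod[of "cauchy_F M z"] dist_w
    by (intro mult_mono) (auto simp: Fw)
  finally have ab_N: "a * b * N\<^sup>2 \<le> 17 / 16 * pi\<^sup>2"
    by (simp add: y_def algebra_simps)
  have "\<bar>\<alpha> - \<beta>\<bar> - pi \<le> cmod (of_real (2 * pi * of_int k) :: complex)"
    unfolding norm_of_real using k by (simp add: abs_minus_commute)
  also have "\<dots> \<le> N + cmod (cauchy_F M z)"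
    using norm_triangle_ineq4[of "cauchy_F M w" "cauchy_F M z"] by (simp add: N_def Fw)
  finally have "\<bar>\<alpha> - \<beta>\<bar> - 5 * pi / 4 \<le> N"
    using Fz by simp
  then have "a * b * (\<bar>\<alpha> - \<beta>\<bar> - 5 * pi / 4)\<^sup>2 \<le> a * b * N\<^sup>2"
    using a b far by (intro mult_left_mono power_mono) auto
  then show ?thesis
    using ab_N by (simp add: a_def b_def)
qed simp

theorem corollary5p15:
  fixes M :: "real measure" and \<alpha> \<beta> :: real
  assumes "M \<in> class_L"
    and "\<alpha> \<noteq> \<beta>"
    and "measure M {\<alpha>} > 0"
    and "measure M {\<beta>} > 0"
  shows "min (measure M {\<alpha>}) (measure M {\<beta>}) < 2 * pi / \<bar>\<alpha> - \<beta>\<bar>"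
proof (rule ccontr)
  define a b d where "a = measure M {\<alpha>}" and "b = measure M {\<beta>}" and "d = \<bar>\<alpha> - \<beta>\<bar>"
  define m where "m = min a b"
  interpret prob_space M
    using assms(1) by (simp add: class_L_def)
  have "a + b = prob ({\<alpha>} \<union> {\<beta>})"
    using assms(1,2) unfolding a_def b_def by (intro finite_measure_Union[symmetric]) (auto simp: class_L_def)
  then have "a + b \<le> 1"
    by simp
  then have "m \<le> 1 / 2" "m * m \<le> a * b"
    using assms(3,4)
    by (auto simp: m_def a_def b_def min_def intro: mult_mono)
  moreover assume "\<not> ?thesis"
  then have "2 * pi \<le> m * d"
    using assms(2) by (simp add: m_def a_def b_def d_def not_less divide_le_eq mult.commute min_def)
  moreover have "m * d \<le> d / 2" and "m * (5 * pi / 4) \<le> 5 * pi / 8"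
    using mult_right_mono[OF \<open>m \<le> 1 / 2\<close>, of d] mult_right_mono[OF \<open>m \<le> 1 / 2\<close>, of "5 * pi / 4"]
    by (simp_all add: d_def)
  ultimately have "d \<ge> 4 * pi" and "11 * pi / 8 \<le> m * d - m * (5 * pi / 4)"
    by linarith+
  then have m_far: "11 * pi / 8 \<le> m * (d - 5 * pi / 4)"
    by (simp only: right_diff_distrib)
  have "(11 * pi / 8)\<^sup>2 \<le> m * m * (d - 5 * pi / 4)\<^sup>2"
    using m_far pi_gt_zero by (simp add: power_mono flip: power2_eq_square power_mult_distrib)
  also have "\<dots> \<le> a * b * (d - 5 * pi / 4)\<^sup>2"
    using \<open>m * m \<le> a * b\<close> by (intro mult_right_mono) auto
  also have "\<dots> \<le> 17 / 16 * pi\<^sup>2"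
    using atom_masses_product_bound[OF assms(1), of \<alpha> \<beta>] \<open>d \<ge> 4 * pi\<close> pi_gt_zero
    unfolding a_def b_def d_def by linarith
  finally show False
    using pi_gt_zero by (simp add: power2_eq_square)
qed

end
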